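(* Let $n\ge 1$, $m_1,\ldots,m_k\in\mathbb{N}$ with $m_1+\cdots+m_k=n$. For an integer $p$ let $V_p:\{|z|=1\}\to U(n)$, $V_p(z)=\mathrm{diag}(z^p,1,\ldots,1)$, and define $$B_{n,p}(m_1,\ldots,m_k)=\{(f_1,f_2)\mid f_1,f_2\in C(D^2\to M_n(\mathbb{C})),\ f_1(z)=V_p(z)^*f_2(z)V_p(z)\text{ for }|z|=1,\ f_1(0)\in M_{m_1}(\mathbb{C})\oplus\cdots\oplus M_{m_k}(\mathbb{C})\},$$ a $C^*$-algebra under pointwise operations and the sup norm, where $D^2=\{z\in\mathbb{C}:|z|\le1\}$. If $l_1\equiv l_2 \pmod{\gcd(m_1,\ldots,m_k)}$, then $B_{n,l_1}(m_1,\ldots,m_k)\simeq B_{n,l_2}(m_1,\ldots,m_k)$.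
   Context: $B_{n,p}(m_1,\ldots,m_k)$ is the algebra of continuous sections of the algebraic bundle $\mathcal{B}_{n,p}$ over the $2$-sphere with fibre $M_n(\mathbb{C})$ obtained by gluing two closed disks (the two hemispheres) along the equator via the sewing map $V_p$ (acting by $m\mapsto V_p^*mV_p$), whose sections are required to take block-diagonal values (blocks of sizes $m_1,\ldots,m_k$) at a fixed point, taken as the centre $0$ of the first disk. $M_{m_1}(\mathbb{C})\oplus\cdots\oplus M_{m_k}(\mathbb{C})$ denotes the block-diagonal subalgebra of $M_n(\mathbb{C})$. *)

theory Defs
  imports "HOL-Analysis.Analysis"
begin

text \<open>n x n complex matrices are represented as functions nat => nat => complex
  whose entries vanish outside the index range {0..<n} x {0..<n}.\<close>
type_synonym cmat = "nat \<Rightarrow> nat \<Rightarrow> complex"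

definition mat_n :: "nat \<Rightarrow> cmat set" where
  "mat_n n = {A. \<forall>i j. (n \<le> i \<or> n \<le> j) \<longrightarrow> A i j = 0}"

definition mzero :: cmat where "mzero = (\<lambda>i j. 0)"

definition madd :: "cmat \<Rightarrow> cmat \<Rightarrow> cmat" where
  "madd A B = (\<lambda>i j. A i j + B i j)"

definition msmult :: "complex \<Rightarrow> cmat \<Rightarrow> cmat" where
  "msmult c A = (\<lambda>i j. c * A i j)"

definition mmul :: "nat \<Rightarrow> cmat \<Rightarrow> cmat \<Rightarrow> cmat" where
  "mmul n A B = (\<lambda>i j. if i < n \<and> j < n then (\<Sum>k<n. A i k * B k j) else 0)"

definition madj :: "cmat \<Rightarrow> cmat" where
  "madj A = (\<lambda>i j. cnj (A j i))"

definition Vp :: "nat \<Rightarrow> int \<Rightarrow> complex \<Rightarrow> cmat" where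
  "Vp n p z = (\<lambda>i j. if i = j \<and> i < n then (if i = 0 then z powi p else 1) else 0)"

text \<open>Index of the diagonal block (of sizes ms) containing row/column i.\<close>
definition blk :: "nat list \<Rightarrow> nat \<Rightarrow> nat" where
  "blk ms i = card {t. t < length ms \<and> sum_list (take (Suc t) ms) \<le> i}"

definition block_diag :: "nat list \<Rightarrow> cmat \<Rightarrow> bool" where
  "block_diag ms A \<longleftrightarrow> (\<forall>i j. A i j \<noteq> 0 \<longrightarrow> blk ms i = blk ms j)"

definition disk :: "complex set" where "disk = cball 0 1"

definition Cdisk :: "nat \<Rightarrow> (complex \<Rightarrow> cmat) set" where
  "Cdisk n = {f. (\<forall>z. f z \<in> mat_n n) \<and> (\<forall>z. z \<notin> disk \<longrightarrow> f z = mzero)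
                \<and> (\<forall>i j. continuous_on disk (\<lambda>z. f z i j))}"

definition Balg :: "nat \<Rightarrow> int \<Rightarrow> nat list \<Rightarrow> ((complex \<Rightarrow> cmat) \<times> (complex \<Rightarrow> cmat)) set" where
  "Balg n p ms = {(f1, f2). f1 \<in> Cdisk n \<and> f2 \<in> Cdisk n
      \<and> (\<forall>z. cmod z = 1 \<longrightarrow> f1 z = mmul n (madj (Vp n p z)) (mmul n (f2 z) (Vp n p z)))
      \<and> block_diag ms (f1 0)}"

definition badd where "badd x y = (\<lambda>z. madd (fst x z) (fst y z), \<lambda>z. madd (snd x z) (snd y z))"
definition bsmult where "bsmult c x = (\<lambda>z. msmult c (fst x z), \<lambda>z. msmult c (snd x z))"
definition bmul where "bmul n x y = (\<lambda>z. mmul n (fst x z) (fst y z), \<lambda>z. mmul n (snd x z) (snd y z))"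
definition bstar where "bstar x = (\<lambda>z. madj (fst x z), \<lambda>z. madj (snd x z))"

text \<open>*-isomorphism between the two algebras (bijective *-homomorphism;
  such maps between C*-algebras are automatically isometric).\<close>
definition star_iso_B :: "nat \<Rightarrow> int \<Rightarrow> int \<Rightarrow> nat list \<Rightarrow> bool" where
  "star_iso_B n p q ms \<longleftrightarrow> (\<exists>\<Phi>. bij_betw \<Phi> (Balg n p ms) (Balg n q ms)
     \<and> (\<forall>x\<in>Balg n p ms. \<forall>y\<in>Balg n p ms.
           \<Phi> (badd x y) = badd (\<Phi> x) (\<Phi> y) \<and> \<Phi> (bmul n x y) = bmul n (\<Phi> x) (\<Phi> y))
     \<and> (\<forall>x\<in>Balg n p ms. \<forall>c. \<Phi> (bsmult c x) = bsmult c (\<Phi> x))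
     \<and> (\<forall>x\<in>Balg n p ms. \<Phi> (bstar x) = bstar (\<Phi> x)))"

end

theory Submission
  imports Defs
begin

(* Conjugating the two halves of a section by unitary-valued functions that intertwine the
   sewing maps gives *-isomorphisms, and it is convenient to allow any diagonal sewing map
   diag(z^c_0, ..., z^c_(n-1)).  Two such conjugations suffice.  Conjugating the first half by
   the block-constant unitary diag(u^a_t) on block t, with u = z/|z|, is discontinuous only at 0,
   where the sections are block diagonal and hence commute with it; this shifts the exponents
   by a_t on block t and so their sum by a_1 m_1 + ... + a_k m_k, which by Bezout can be any
   multiple of gcd(m_1, ..., m_k).  Conjugating the second half by the continuous unitary
   [[g, -b], [b, cnj g]] in two coordinates, with |g|^2 + b^2 = 1 and g = z^e on the circle,
   moves the exponent e from one diagonal position to another.  Hence only the sum of the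
   exponents matters. *)

definition mdiag :: "nat \<Rightarrow> (nat \<Rightarrow> complex) \<Rightarrow> cmat" where
  "mdiag n d = (\<lambda>i j. if i = j \<and> i < n then d i else 0)"

definition mid :: "nat \<Rightarrow> cmat" where
  "mid n = mdiag n (\<lambda>_. 1)"

lemma mmul_assoc: "mmul n (mmul n A B) C = mmul n A (mmul n B C)"
  unfolding mmul_def
  by (rule ext)+ (auto simp: sum_distrib_left sum_distrib_right mult.assoc intro: sum.swap)

lemma madj_mmul: "madj (mmul n A B) = mmul n (madj B) (madj A)"
  unfolding mmul_def madj_def by (rule ext)+ (auto simp: mult.commute)

lemma madj_madj [simp]: "madj (madj A) = A"
  unfolding madj_def by simp

lemma mmul_mat_n: "mmul n A B \<in> mat_n n"
  unfolding mmul_def mat_n_def by auto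

lemma madj_mat_n: "A \<in> mat_n n \<Longrightarrow> madj A \<in> mat_n n"
  unfolding madj_def mat_n_def by auto

lemma mdiag_mat_n: "mdiag n d \<in> mat_n n"
  unfolding mdiag_def mat_n_def by auto

lemma mmul_mdiag_left: "A \<in> mat_n n \<Longrightarrow> mmul n (mdiag n d) A = (\<lambda>i j. d i * A i j)"
proof (intro ext)
  fix i j assume A: "A \<in> mat_n n"
  show "mmul n (mdiag n d) A i j = d i * A i j"
  proof (cases "i < n \<and> j < n")
    case True
    have "(\<Sum>k<n. mdiag n d i k * A k j) = (\<Sum>k<n. if k = i then d i * A i j else 0)"
      by (rule sum.cong) (auto simp: mdiag_def)
    with True show ?thesis by (simp add: mmul_def)
  next
    case False with A show ?thesis by (auto simp: mmul_def mat_n_def)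
  qed
qed

lemma mmul_mdiag_right: "A \<in> mat_n n \<Longrightarrow> mmul n A (mdiag n d) = (\<lambda>i j. A i j * d j)"
proof (intro ext)
  fix i j assume A: "A \<in> mat_n n"
  show "mmul n A (mdiag n d) i j = A i j * d j"
  proof (cases "i < n \<and> j < n")
    case True
    have "(\<Sum>k<n. A i k * mdiag n d k j) = (\<Sum>k<n. if k = j then A i j * d j else 0)"
      by (rule sum.cong) (auto simp: mdiag_def)
    with True show ?thesis by (simp add: mmul_def)
  next
    case False with A show ?thesis by (auto simp: mmul_def mat_n_def)
  qed
qed

lemma mmul_mid_left: "A \<in> mat_n n \<Longrightarrow> mmul n (mid n) A = A"
  by (simp add: mid_def mmul_mdiag_left)

lemma mmul_mid_right: "A \<in> mat_n n \<Longrightarrow> mmul n A (mid n) = A"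
  by (simp add: mid_def mmul_mdiag_right)

lemma madj_mdiag: "madj (mdiag n d) = mdiag n (\<lambda>i. cnj (d i))"
  unfolding madj_def mdiag_def by (rule ext)+ auto

lemma madj_mid [simp]: "madj (mid n) = mid n"
  by (simp add: mid_def madj_mdiag)

lemma mmul_mdiag_mdiag: "mmul n (mdiag n d) (mdiag n e) = mdiag n (\<lambda>i. d i * e i)"
  by (simp add: mmul_mdiag_left mdiag_mat_n) (simp add: mdiag_def fun_eq_iff)

lemma mdiag_cong: "(\<And>i. i < n \<Longrightarrow> d i = e i) \<Longrightarrow> mdiag n d = mdiag n e"
  unfolding mdiag_def by (rule ext)+ auto

lemma mmul_mzero_left [simp]: "mmul n mzero A = mzero"
  unfolding mmul_def mzero_def by (intro ext) auto

lemma mmul_mzero_right [simp]: "mmul n A mzero = mzero"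
  unfolding mmul_def mzero_def by (intro ext) auto

lemma mmul_madd_right: "mmul n A (madd B C) = madd (mmul n A B) (mmul n A C)"
  unfolding mmul_def madd_def by (rule ext)+ (auto simp: distrib_left sum.distrib)

lemma mmul_madd_left: "mmul n (madd B C) A = madd (mmul n B A) (mmul n C A)"
  unfolding mmul_def madd_def by (rule ext)+ (auto simp: distrib_right sum.distrib)

lemma mmul_msmult_right: "mmul n A (msmult c B) = msmult c (mmul n A B)"
  unfolding mmul_def msmult_def by (rule ext)+ (auto simp: sum_distrib_left mult.left_commute)

lemma mmul_msmult_left: "mmul n (msmult c B) A = msmult c (mmul n B A)"
  unfolding mmul_def msmult_def by (rule ext)+ (auto simp: sum_distrib_left mult.assoc)

lemma mmul_cancel_left:
  assumes "mmul n V U = mid n" "Y \<in> mat_n n"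
  shows "mmul n V (mmul n U Y) = Y"
  by (simp add: mmul_assoc [symmetric] assms mmul_mid_left)

lemma mmul_mdiag_conj:
  assumes "X \<in> mat_n n"
  shows "mmul n (mdiag n d) (mmul n X (madj (mdiag n d))) = (\<lambda>i j. d i * X i j * cnj (d j))"
proof -
  have "mmul n X (madj (mdiag n d)) = (\<lambda>i j. X i j * cnj (d j))"
    by (simp add: madj_mdiag mmul_mdiag_right assms)
  moreover have "(\<lambda>i j. X i j * cnj (d j)) \<in> mat_n n"
    using assms unfolding mat_n_def by auto
  ultimately show ?thesis by (simp add: mmul_mdiag_left mult.assoc)
qed

definition Vdiag :: "nat \<Rightarrow> (nat \<Rightarrow> int) \<Rightarrow> complex \<Rightarrow> cmat" where
  "Vdiag n c z = mdiag n (\<lambda>i. z powi c i)"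

lemma Vdiag_mat_n: "Vdiag n c z \<in> mat_n n"
  unfolding Vdiag_def by (rule mdiag_mat_n)

definition Cdisk_blk :: "nat \<Rightarrow> nat list \<Rightarrow> (complex \<Rightarrow> cmat) set" where
  "Cdisk_blk n ms = {f \<in> Cdisk n. block_diag ms (f 0)}"

type_synonym section_pair = "(complex \<Rightarrow> cmat) \<times> (complex \<Rightarrow> cmat)"

definition Balg_diag :: "nat \<Rightarrow> (nat \<Rightarrow> int) \<Rightarrow> nat list \<Rightarrow> section_pair set" where
  "Balg_diag n c ms = {(f1, f2). f1 \<in> Cdisk_blk n ms \<and> f2 \<in> Cdisk n
      \<and> (\<forall>z. cmod z = 1 \<longrightarrow> f1 z = mmul n (madj (Vdiag n c z)) (mmul n (f2 z) (Vdiag n c z)))}"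

lemma Balg_eq_Balg_diag: "Balg n p ms = Balg_diag n (\<lambda>i. if i = 0 then p else 0) ms"
proof -
  have "Vp n p z = Vdiag n (\<lambda>i. if i = 0 then p else 0) z" for z
    unfolding Vp_def Vdiag_def mdiag_def by (rule ext)+ auto
  then show ?thesis unfolding Balg_def Balg_diag_def Cdisk_blk_def by auto
qed

lemma Balg_diag_cong: "(\<And>i. i < n \<Longrightarrow> c i = c' i) \<Longrightarrow> Balg_diag n c ms = Balg_diag n c' ms"
  unfolding Balg_diag_def Vdiag_def by (simp cong: mdiag_cong)

definition star_iso :: "nat \<Rightarrow> section_pair set \<Rightarrow> section_pair set \<Rightarrow> bool" where
  "star_iso n A B \<longleftrightarrow> (\<exists>\<Phi>. bij_betw \<Phi> A B
     \<and> (\<forall>x\<in>A. \<forall>y\<in>A.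
          \<Phi> (badd x y) = badd (\<Phi> x) (\<Phi> y) \<and> \<Phi> (bmul n x y) = bmul n (\<Phi> x) (\<Phi> y))
     \<and> (\<forall>x\<in>A. \<forall>c. \<Phi> (bsmult c x) = bsmult c (\<Phi> x))
     \<and> (\<forall>x\<in>A. \<Phi> (bstar x) = bstar (\<Phi> x)))"

lemma star_iso_B_iff: "star_iso_B n p q ms \<longleftrightarrow> star_iso n (Balg n p ms) (Balg n q ms)"
  unfolding star_iso_B_def star_iso_def by simp

lemma star_iso_refl: "star_iso n A A"
  unfolding star_iso_def by (rule exI [of _ id]) auto

lemma star_iso_trans:
  assumes "star_iso n A B" "star_iso n B C"
  shows "star_iso n A C"
proof -
  obtain F where F: "bij_betw F A B"
     "\<forall>x\<in>A. \<forall>y\<in>A. F (badd x y) = badd (F x) (F y) \<and> F (bmul n x y) = bmul n (F x) (F y)"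
     "\<forall>x\<in>A. \<forall>c. F (bsmult c x) = bsmult c (F x)" "\<forall>x\<in>A. F (bstar x) = bstar (F x)"
    using assms(1) unfolding star_iso_def by blast
  obtain G where G: "bij_betw G B C"
     "\<forall>x\<in>B. \<forall>y\<in>B. G (badd x y) = badd (G x) (G y) \<and> G (bmul n x y) = bmul n (G x) (G y)"
     "\<forall>x\<in>B. \<forall>c. G (bsmult c x) = bsmult c (G x)" "\<forall>x\<in>B. G (bstar x) = bstar (G x)"
    using assms(2) unfolding star_iso_def by blast
  have "F x \<in> B" if "x \<in> A" for x using F(1) that bij_betwE by blast
  with F G bij_betw_trans [OF F(1) G(1)] show ?thesis
    unfolding star_iso_def by (intro exI [of _ "G \<circ> F"]) simp
qed

definition conj_by ::
  "nat \<Rightarrow> (complex \<Rightarrow> cmat) \<Rightarrow> (complex \<Rightarrow> cmat) \<Rightarrow> complex \<Rightarrow> cmat" where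
  "conj_by n U f = (\<lambda>z. mmul n (U z) (mmul n (f z) (madj (U z))))"

definition unitary_on :: "nat \<Rightarrow> complex set \<Rightarrow> (complex \<Rightarrow> cmat) \<Rightarrow> bool" where
  "unitary_on n S U \<longleftrightarrow>
     (\<forall>z\<in>S. mmul n (U z) (madj (U z)) = mid n \<and> mmul n (madj (U z)) (U z) = mid n)"

lemma unitary_on_mid: "unitary_on n S (\<lambda>z. mid n)"
  unfolding unitary_on_def mid_def by (simp add: madj_mdiag mmul_mdiag_mdiag)

lemma unitary_on_mdiag:
  assumes "\<And>z i. cmod (d z i) = 1"
  shows "unitary_on n S (\<lambda>z. mdiag n (d z))"
proof -
  have "d z i * cnj (d z i) = 1" for z i
    using assms [of z i] by (simp add: complex_norm_square [symmetric])
  then show ?thesis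
    unfolding unitary_on_def by (simp add: madj_mdiag mmul_mdiag_mdiag mid_def mult.commute)
qed

lemma Cdisk_mat_n: "f \<in> Cdisk n \<Longrightarrow> f z \<in> mat_n n"
  unfolding Cdisk_def by auto

lemma Cdisk_outside: "f \<in> Cdisk n \<Longrightarrow> z \<notin> disk \<Longrightarrow> f z = mzero"
  unfolding Cdisk_def by auto

lemma conj_by_mid: "f \<in> Cdisk n \<Longrightarrow> conj_by n (\<lambda>z. mid n) f = f"
  unfolding conj_by_def by (simp add: mmul_mid_left mmul_mid_right mmul_mat_n Cdisk_mat_n)

lemma conj_by_conj_by:
  assumes "\<forall>z\<in>disk. mmul n (V z) (U z) = mid n" "f \<in> Cdisk n"
  shows "conj_by n V (conj_by n U f) = f"
proof
  fix z show "conj_by n V (conj_by n U f) z = f z"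
  proof (cases "z \<in> disk")
    case True
    have VU: "mmul n (V z) (U z) = mid n" using assms True by auto
    have "mmul n (madj (U z)) (madj (V z)) = mid n"
      using arg_cong [OF VU, of madj] by (simp only: madj_mmul madj_mid)
    with VU assms(2) show ?thesis
      unfolding conj_by_def
      by (simp add: mmul_assoc [symmetric] mmul_mid_left Cdisk_mat_n)
        (simp add: mmul_assoc mmul_mid_right Cdisk_mat_n)
  next
    case False with assms(2) show ?thesis by (simp add: conj_by_def Cdisk_outside)
  qed
qed

lemma conj_by_madd: "conj_by n U (\<lambda>z. madd (f z) (g z)) = (\<lambda>z. madd (conj_by n U f z) (conj_by n U g z))"
  unfolding conj_by_def by (simp add: mmul_madd_left mmul_madd_right)

lemma conj_by_msmult: "conj_by n U (\<lambda>z. msmult c (f z)) = (\<lambda>z. msmult c (conj_by n U f z))"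
  unfolding conj_by_def by (simp add: mmul_msmult_left mmul_msmult_right)

lemma conj_by_madj: "conj_by n U (\<lambda>z. madj (f z)) = (\<lambda>z. madj (conj_by n U f z))"
  unfolding conj_by_def by (simp add: madj_mmul mmul_assoc)

lemma conj_by_mmul:
  assumes "unitary_on n disk U" "f \<in> Cdisk n" "g \<in> Cdisk n"
  shows "conj_by n U (\<lambda>z. mmul n (f z) (g z)) = (\<lambda>z. mmul n (conj_by n U f z) (conj_by n U g z))"
proof
  fix z show "conj_by n U (\<lambda>z. mmul n (f z) (g z)) z = mmul n (conj_by n U f z) (conj_by n U g z)"
  proof (cases "z \<in> disk")
    case True
    then have "mmul n (madj (U z)) (U z) = mid n" using assms(1) unfolding unitary_on_def by auto
    then show ?thesis unfolding conj_by_def by (simp add: mmul_assoc mmul_cancel_left mmul_mat_n)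
  next
    case False with assms show ?thesis by (simp add: conj_by_def Cdisk_outside)
  qed
qed

lemma continuous_on_mmul:
  assumes "\<And>i j. continuous_on S (\<lambda>z. A z i j)" "\<And>i j. continuous_on S (\<lambda>z. B z i j)"
  shows "continuous_on S (\<lambda>z. mmul n (A z) (B z) i j)"
proof (cases "i < n \<and> j < n")
  case True with assms show ?thesis unfolding mmul_def by (simp add: continuous_intros)
next
  case False
  then have "(\<lambda>z. mmul n (A z) (B z) i j) = (\<lambda>z. 0)" by (auto simp: mmul_def)
  then show ?thesis by (simp only: continuous_on_const)
qed

lemma continuous_on_madj:
  "(\<And>i j. continuous_on S (\<lambda>z. A z i j)) \<Longrightarrow> continuous_on S (\<lambda>z. madj (A z) i j)"
  unfolding madj_def by (simp add: continuous_intros)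

lemma conj_by_Cdisk:
  assumes U: "\<And>i j. continuous_on disk (\<lambda>z. U z i j)" and f: "f \<in> Cdisk n"
  shows "conj_by n U f \<in> Cdisk n"
proof -
  have "continuous_on disk (\<lambda>z. f z i j)" for i j using f unfolding Cdisk_def by auto
  then have "continuous_on disk (\<lambda>z. conj_by n U f z i j)" for i j
    unfolding conj_by_def by (intro continuous_on_mmul continuous_on_madj U)
  with f show ?thesis unfolding Cdisk_def by (auto simp: conj_by_def mmul_mat_n Cdisk_outside)
qed

lemma mmul_intertwine:
  assumes "mmul n A1 (madj V) = mmul n (madj V') A2"
  shows "mmul n A1 (mmul n (mmul n (madj V) (mmul n X V)) (madj A1))
       = mmul n (madj V') (mmul n (mmul n A2 (mmul n X (madj A2))) V')"
proof -
  have adj: "mmul n V (madj A1) = mmul n (madj A2) V'"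
    using arg_cong [OF assms, of madj] by (simp add: madj_mmul)
  have "mmul n A1 (mmul n (madj V) Y) = mmul n (madj V') (mmul n A2 Y)" for Y
    by (simp add: mmul_assoc [symmetric] assms)
  then show ?thesis by (simp add: mmul_assoc adj)
qed

lemma mmul_intertwine_madj:
  assumes "mmul n A1 (madj V) = mmul n (madj V') A2"
    and "mmul n (madj A1) A1 = mid n" "mmul n A2 (madj A2) = mid n" "V \<in> mat_n n" "V' \<in> mat_n n"
  shows "mmul n (madj A1) (madj V') = mmul n (madj V) (madj A2)"
proof -
  have "mmul n (madj A1) (madj V') = mmul n (madj A1) (mmul n (mmul n (madj V') A2) (madj A2))"
    by (simp add: mmul_assoc assms(3) mmul_mid_right madj_mat_n assms(5))
  also have "\<dots> = mmul n (madj V) (madj A2)"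
    by (simp add: assms(1) [symmetric] mmul_assoc [symmetric] assms(2))
      (simp add: mmul_mid_left madj_mat_n assms(4))
  finally show ?thesis .
qed

lemma conj_by_pair_Balg_diag:
  assumes "conj_by n U1 ` Cdisk_blk n ms \<subseteq> Cdisk_blk n ms"
    and "conj_by n U2 ` Cdisk n \<subseteq> Cdisk n"
    and "\<And>z. cmod z = 1 \<Longrightarrow> mmul n (U1 z) (madj (Vdiag n c z)) = mmul n (madj (Vdiag n c' z)) (U2 z)"
    and "(f1, f2) \<in> Balg_diag n c ms"
  shows "(conj_by n U1 f1, conj_by n U2 f2) \<in> Balg_diag n c' ms"
  using assms unfolding Balg_diag_def by (auto simp: conj_by_def mmul_intertwine)

lemma star_iso_conj_by:
  assumes U1: "unitary_on n disk U1" and U2: "unitary_on n disk U2"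
    and blk1: "conj_by n U1 ` Cdisk_blk n ms \<subseteq> Cdisk_blk n ms"
    and blk1': "conj_by n (\<lambda>z. madj (U1 z)) ` Cdisk_blk n ms \<subseteq> Cdisk_blk n ms"
    and cont2: "conj_by n U2 ` Cdisk n \<subseteq> Cdisk n"
    and cont2': "conj_by n (\<lambda>z. madj (U2 z)) ` Cdisk n \<subseteq> Cdisk n"
    and intertwine: "\<And>z. cmod z = 1 \<Longrightarrow>
      mmul n (U1 z) (madj (Vdiag n c z)) = mmul n (madj (Vdiag n c' z)) (U2 z)"
  shows "star_iso n (Balg_diag n c ms) (Balg_diag n c' ms)"
proof -
  define F where "F x = (conj_by n U1 (fst x), conj_by n U2 (snd x))" for x
  define G where "G x = (conj_by n (\<lambda>z. madj (U1 z)) (fst x), conj_by n (\<lambda>z. madj (U2 z)) (snd x))" for x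
  have intertwine': "mmul n (madj (U1 z)) (madj (Vdiag n c' z)) = mmul n (madj (Vdiag n c z)) (madj (U2 z))"
    if "cmod z = 1" for z
  proof (rule mmul_intertwine_madj [OF intertwine [OF that] _ _ Vdiag_mat_n Vdiag_mat_n])
    have "z \<in> disk" using that by (simp add: disk_def)
    then show "mmul n (madj (U1 z)) (U1 z) = mid n" "mmul n (U2 z) (madj (U2 z)) = mid n"
      using U1 U2 unfolding unitary_on_def by auto
  qed
  have F: "F x \<in> Balg_diag n c' ms" if "x \<in> Balg_diag n c ms" for x
    using conj_by_pair_Balg_diag [OF blk1 cont2 intertwine, of "fst x" "snd x"] that
    by (simp add: F_def)
  have G: "G x \<in> Balg_diag n c ms" if "x \<in> Balg_diag n c' ms" for x
    using conj_by_pair_Balg_diag [OF blk1' cont2' intertwine', of "fst x" "snd x"] that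
    by (simp add: G_def)
  have inv: "\<forall>z\<in>disk. mmul n (madj (U z)) (U z) = mid n"
      "\<forall>z\<in>disk. mmul n (U z) (madj (U z)) = mid n" if "unitary_on n disk U" for U
    using that unfolding unitary_on_def by auto
  have halves: "fst x \<in> Cdisk n" "snd x \<in> Cdisk n" if "x \<in> Balg_diag n c'' ms" for x c''
    using that unfolding Balg_diag_def Cdisk_blk_def by auto
  have "bij_betw F (Balg_diag n c ms) (Balg_diag n c' ms)"
  proof (rule bij_betw_byWitness [where f' = G])
    show "\<forall>x\<in>Balg_diag n c ms. G (F x) = x" "\<forall>y\<in>Balg_diag n c' ms. F (G y) = y"
      using halves by (simp_all add: F_def G_def conj_by_conj_by inv U1 U2)
  qed (use F G in auto)
  with halves show ?thesis
    unfolding star_iso_def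
    by (intro exI [of _ F])
      (simp add: F_def badd_def bmul_def bsmult_def bstar_def conj_by_madd conj_by_msmult
        conj_by_madj conj_by_mmul U1 U2)
qed

lemma cnj_eq_inverse: "cmod z = 1 \<Longrightarrow> cnj z = inverse z"
  using divide_conv_cnj [of z 1] by (simp add: divide_inverse)

lemma continuous_on_mult_vanishing:
  fixes u h :: "'a::t2_space \<Rightarrow> 'b::real_normed_algebra"
  assumes h: "continuous_on S h" "h a = 0"
    and u: "\<And>x. x \<in> S \<Longrightarrow> x \<noteq> a \<Longrightarrow> isCont u x" "\<And>x. norm (u x) \<le> 1"
  shows "continuous_on S (\<lambda>x. u x * h x)"
  unfolding continuous_on_eq_continuous_within
proof
  fix x assume x: "x \<in> S"
  have hx: "continuous (at x within S) h"
    using h(1) x continuous_on_eq_continuous_within by blast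
  show "continuous (at x within S) (\<lambda>x. u x * h x)"
  proof (cases "x = a")
    case False
    with u(1) x have "continuous (at x within S) u"
      using continuous_at_imp_continuous_at_within by blast
    then show ?thesis using hx by (rule continuous_mult)
  next
    case True
    have "(h \<longlongrightarrow> 0) (at a within S)"
      using hx h(2) True by (simp add: continuous_within)
    then have lim: "((\<lambda>x. norm (h x)) \<longlongrightarrow> 0) (at a within S)"
      by (simp add: tendsto_norm_zero)
    have bound: "\<forall>y. norm (u y * h y) \<le> norm (h y)"
    proof
      fix y
      have "norm (u y) * norm (h y) \<le> norm (h y)"
        using u(2) [of y] by (simp add: mult_left_le_one_le)
      then show "norm (u y * h y) \<le> norm (h y)"
        using norm_mult_ineq [of "u y" "h y"] by linarith
    qed
    have "((\<lambda>x. u x * h x) \<longlongrightarrow> 0) (at a within S)"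
      by (rule Lim_null_comparison [OF always_eventually [OF bound] lim])
    with True h(2) show ?thesis unfolding continuous_within by simp
  qed
qed

definition phase :: "complex \<Rightarrow> complex" where
  "phase z = (if z = 0 then 1 else sgn z)"

lemma norm_phase [simp]: "cmod (phase z) = 1"
  unfolding phase_def by (simp add: norm_sgn)

lemma phase_nonzero: "phase z \<noteq> 0"
  using norm_phase [of z] by (metis norm_zero zero_neq_one)

lemma isCont_phase: "x \<noteq> 0 \<Longrightarrow> isCont phase x"
proof -
  assume x: "x \<noteq> 0"
  have "eventually (\<lambda>z. phase z = sgn z) (nhds x)"
    using t1_space_nhds [OF x] by eventually_elim (simp add: phase_def)
  moreover have "isCont sgn x" using x by (intro continuous_intros) auto
  ultimately show ?thesis using isCont_cong by blast
qed

lemma phase_circle: "cmod z = 1 \<Longrightarrow> phase z = z"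
  unfolding phase_def by (auto simp: sgn_eq)

definition twist :: "nat \<Rightarrow> nat list \<Rightarrow> (nat \<Rightarrow> int) \<Rightarrow> complex \<Rightarrow> cmat" where
  "twist n ms a z = mdiag n (\<lambda>i. phase z powi a (blk ms i))"

lemma unitary_on_twist: "unitary_on n S (twist n ms a)"
  unfolding twist_def by (rule unitary_on_mdiag) (simp add: norm_power_int)

lemma madj_twist: "madj (twist n ms a z) = twist n ms (\<lambda>t. - a t) z"
  unfolding twist_def madj_mdiag
  by (simp add: complex_cnj_power_int cnj_eq_inverse power_int_inverse power_int_minus)

lemma conj_by_twist_Cdisk_blk: "conj_by n (twist n ms a) ` Cdisk_blk n ms \<subseteq> Cdisk_blk n ms"
proof clarify
  fix f assume "f \<in> Cdisk_blk n ms"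
  then have f: "f \<in> Cdisk n" and f0: "block_diag ms (f 0)" by (auto simp: Cdisk_blk_def)
  define d where "d z i = phase z powi a (blk ms i)" for z i
  define u where "u i j z = d z i * cnj (d z j)" for i j z
  have conj_eq: "conj_by n (twist n ms a) f = (\<lambda>z i j. u i j z * f z i j)"
    unfolding conj_by_def twist_def
    by (simp add: mmul_mdiag_conj Cdisk_mat_n [OF f] u_def d_def [symmetric] ac_simps)
  have norm_d: "cmod (d z i) = 1" for z i by (simp add: d_def norm_power_int)
  \<comment> \<open>The twist is discontinuous only at 0, where the off-block entries of f vanish.\<close>
  have "continuous_on disk (\<lambda>z. u i j z * f z i j)" for i j
  proof (cases "blk ms i = blk ms j")
    case True
    then have "d z i = d z j" for z by (simp add: d_def)
    then have "u i j z = 1" for z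
      using complex_norm_square [of "d z j"] norm_d [of z j]
      by (simp add: u_def del: complex_cnj_power_int)
    with f show ?thesis by (simp add: Cdisk_def)
  next
    case False
    show ?thesis
    proof (rule continuous_on_mult_vanishing [where a = 0])
      show "continuous_on disk (\<lambda>z. f z i j)" using f by (simp add: Cdisk_def)
      show "f 0 i j = 0" using f0 False by (auto simp: block_diag_def)
      show "isCont (u i j) x" if "x \<noteq> 0" for x
        unfolding u_def d_def using isCont_phase [OF that]
        by (intro continuous_intros) (auto simp: phase_nonzero)
      show "cmod (u i j z) \<le> 1" for z by (simp add: u_def norm_mult norm_d)
    qed
  qed
  moreover have "u i j 0 = 1" for i j by (simp add: u_def d_def phase_def)
  ultimately show "conj_by n (twist n ms a) f \<in> Cdisk_blk n ms"
    using f f0 unfolding conj_eq Cdisk_blk_def Cdisk_def mat_n_def mzero_def by auto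
qed

lemma star_iso_twist: "star_iso n (Balg_diag n c ms) (Balg_diag n (\<lambda>i. c i - a (blk ms i)) ms)"
proof (rule star_iso_conj_by [of n "twist n ms a" "\<lambda>z. mid n"])
  show "unitary_on n disk (twist n ms a)" by (rule unitary_on_twist)
  show "unitary_on n disk (\<lambda>z. mid n)" by (rule unitary_on_mid)
  show "conj_by n (twist n ms a) ` Cdisk_blk n ms \<subseteq> Cdisk_blk n ms"
    by (rule conj_by_twist_Cdisk_blk)
  show "conj_by n (\<lambda>z. madj (twist n ms a z)) ` Cdisk_blk n ms \<subseteq> Cdisk_blk n ms"
    unfolding madj_twist by (rule conj_by_twist_Cdisk_blk)
  show "conj_by n (\<lambda>z. mid n) ` Cdisk n \<subseteq> Cdisk n"
    "conj_by n (\<lambda>z. madj (mid n)) ` Cdisk n \<subseteq> Cdisk n"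
    by (auto simp: conj_by_mid)
  show "mmul n (twist n ms a z) (madj (Vdiag n c z))
      = mmul n (madj (Vdiag n (\<lambda>i. c i - a (blk ms i)) z)) (mid n)" if "cmod z = 1" for z
  proof -
    have "z \<noteq> 0" using that by auto
    then have "z powi a (blk ms i) * inverse z powi c i = inverse z powi (c i - a (blk ms i))" for i
      by (simp add: power_int_diff power_int_inverse divide_inverse mult.commute)
    with that show ?thesis
      by (simp add: twist_def Vdiag_def phase_circle madj_mdiag mmul_mdiag_mdiag mmul_mid_right
          mdiag_mat_n complex_cnj_power_int cnj_eq_inverse)
  qed
qed

definition membed ::
  "nat \<Rightarrow> nat \<Rightarrow> complex \<Rightarrow> complex \<Rightarrow> complex \<Rightarrow> complex \<Rightarrow> cmat" where
  "membed n J a b c d = (\<lambda>i j. if i = 0 \<and> j = 0 then a else if i = 0 \<and> j = J then b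
     else if i = J \<and> j = 0 then c else if i = J \<and> j = J then d else if i = j \<and> i < n then 1 else 0)"

lemma sum_lessThan_remove_two:
  fixes J n :: nat
  assumes "0 < J" "J < n"
  shows "(\<Sum>k<n. f k) = f 0 + f J + (\<Sum>k\<in>{..<n} - {0, J}. f k)"
proof -
  have "(\<Sum>k<n. f k) = f 0 + (\<Sum>k\<in>{..<n} - {0}. f k)"
    using assms sum.remove [of "{..<n}" 0 f] by simp
  also have "(\<Sum>k\<in>{..<n} - {0}. f k) = f J + (\<Sum>k\<in>{..<n} - {0} - {J}. f k)"
    using assms sum.remove [of "{..<n} - {0}" J f] by simp
  finally show ?thesis by (simp add: Diff_insert2 [symmetric] insert_commute add.assoc)
qed

lemma mmul_membed:
  assumes J: "0 < J" "J < n"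
  shows "mmul n (membed n J a b c d) (membed n J a' b' c' d') =
         membed n J (a*a' + b*c') (a*b' + b*d') (c*a' + d*c') (c*b' + d*d')"
proof (intro ext)
  fix i j
  let ?A = "membed n J a b c d" and ?B = "membed n J a' b' c' d'"
  show "mmul n ?A ?B i j = membed n J (a*a' + b*c') (a*b' + b*d') (c*a' + d*c') (c*b' + d*d') i j"
  proof (cases "i < n \<and> j < n")
    case True
    have "(\<Sum>k\<in>{..<n} - {0, J}. ?A i k * ?B k j)
        = (\<Sum>k\<in>{..<n} - {0, J}. if k = i then (if i = j then 1 else 0) else 0)"
      by (rule sum.cong) (auto simp: membed_def)
    with True J show ?thesis
      by (simp add: mmul_def sum_lessThan_remove_two [OF J]) (auto simp: membed_def)
  next
    case False
    with J show ?thesis unfolding mmul_def membed_def by auto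
  qed
qed

lemma madj_membed: "madj (membed n J a b c d) = membed n J (cnj a) (cnj c) (cnj b) (cnj d)"
  unfolding madj_def membed_def by (intro ext) auto

lemma membed_mid: "0 < J \<Longrightarrow> J < n \<Longrightarrow> membed n J 1 0 0 1 = mid n"
  unfolding membed_def mid_def mdiag_def by (intro ext) auto

lemma membed_mdiag:
  "0 < J \<Longrightarrow> J < n \<Longrightarrow>
    membed n J a 0 0 d = mdiag n (\<lambda>i. if i = 0 then a else if i = J then d else 1)"
  unfolding membed_def mdiag_def by (intro ext) auto

lemma continuous_on_membed:
  assumes "continuous_on S A" "continuous_on S B" "continuous_on S C" "continuous_on S D"
  shows "continuous_on S (\<lambda>z. membed n J (A z) (B z) (C z) (D z) i j)"
proof -
  have eq: "(\<lambda>z. membed n J (A z) (B z) (C z) (D z) i j) =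
    (if i = 0 \<and> j = 0 then A else if i = 0 \<and> j = J then B else if i = J \<and> j = 0 then C
     else if i = J \<and> j = J then D else if i = j \<and> i < n then (\<lambda>_. 1) else (\<lambda>_. 0))"
    by (rule ext) (simp add: membed_def)
  show ?thesis unfolding eq using assms by simp
qed

definition disk_powi :: "int \<Rightarrow> complex \<Rightarrow> complex" where
  "disk_powi e z = (if 0 \<le> e then z ^ nat e else cnj z ^ nat (- e))"

definition rotation :: "nat \<Rightarrow> nat \<Rightarrow> int \<Rightarrow> complex \<Rightarrow> cmat" where
  "rotation n J e z =
     (let g = disk_powi e z; b = complex_of_real (sqrt (1 - (cmod g)\<^sup>2)) in membed n J g (- b) b (cnj g))"

lemma continuous_on_disk_powi: "continuous_on S (disk_powi e)"
  unfolding disk_powi_def by (cases "0 \<le> e") (simp_all add: continuous_intros)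

lemma norm_disk_powi_le: "z \<in> disk \<Longrightarrow> cmod (disk_powi e z) \<le> 1"
  unfolding disk_powi_def disk_def by (auto simp: norm_power power_le_one)

lemma disk_powi_circle: "cmod z = 1 \<Longrightarrow> disk_powi e z = z powi e"
  using cnj_eq_inverse [of z] unfolding disk_powi_def power_int_def by (simp add: power_inverse)

lemma unitary_on_rotation:
  assumes J: "0 < J" "J < n"
  shows "unitary_on n disk (rotation n J e)"
  unfolding unitary_on_def
proof
  fix z assume z: "z \<in> disk"
  define g where "g = disk_powi e z"
  define b where "b = sqrt (1 - (cmod g)\<^sup>2)"
  have "(cmod g)\<^sup>2 \<le> 1" using norm_disk_powi_le [OF z] by (simp add: g_def power_le_one)
  then have "of_real b * of_real b = 1 - complex_of_real ((cmod g)\<^sup>2)"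
    by (simp add: b_def flip: of_real_mult)
  then have "g * cnj g + of_real b * of_real b = 1"
    by (simp flip: complex_norm_square)
  then show "mmul n (rotation n J e z) (madj (rotation n J e z)) = mid n \<and>
        mmul n (madj (rotation n J e z)) (rotation n J e z) = mid n"
    unfolding rotation_def Let_def g_def [symmetric] b_def [symmetric]
    by (simp add: madj_membed mmul_membed [OF J] membed_mid [OF J] algebra_simps)
qed

lemma rotation_circle:
  assumes J: "0 < J" "J < n" and z: "cmod z = 1"
  shows "rotation n J e z = mdiag n (\<lambda>i. if i = 0 then z powi e else if i = J then z powi (- e) else 1)"
  using z unfolding rotation_def Let_def
  by (simp add: disk_powi_circle norm_power_int membed_mdiag [OF J] complex_cnj_power_int
      cnj_eq_inverse power_int_inverse)
    (rule mdiag_cong, simp add: power_int_minus)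

lemma star_iso_rotation:
  assumes J: "0 < J" "J < n"
  shows "star_iso n (Balg_diag n c ms)
    (Balg_diag n (\<lambda>i. c i + (if i = 0 then e else if i = J then - e else 0)) ms)"
proof (rule star_iso_conj_by [of n "\<lambda>z. mid n" "rotation n J e"])
  show "unitary_on n disk (\<lambda>z. mid n)" by (rule unitary_on_mid)
  show "unitary_on n disk (rotation n J e)" by (rule unitary_on_rotation [OF J])
  show "conj_by n (\<lambda>z. mid n) ` Cdisk_blk n ms \<subseteq> Cdisk_blk n ms"
    "conj_by n (\<lambda>z. madj (mid n)) ` Cdisk_blk n ms \<subseteq> Cdisk_blk n ms"
    by (auto simp: Cdisk_blk_def conj_by_mid)
  have cont: "continuous_on disk (\<lambda>z. rotation n J e z i j)" for i j
    unfolding rotation_def Let_def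
    by (intro continuous_on_membed continuous_on_disk_powi continuous_intros)
  show "conj_by n (rotation n J e) ` Cdisk n \<subseteq> Cdisk n"
    "conj_by n (\<lambda>z. madj (rotation n J e z)) ` Cdisk n \<subseteq> Cdisk n"
    by (auto intro: conj_by_Cdisk cont continuous_on_madj)
  show "mmul n (mid n) (madj (Vdiag n c z)) = mmul n
      (madj (Vdiag n (\<lambda>i. c i + (if i = 0 then e else if i = J then - e else 0)) z)) (rotation n J e z)"
    if z: "cmod z = 1" for z
  proof -
    have cnj_powi: "cnj z powi k = z powi (- k)" for k
      by (simp add: cnj_eq_inverse [OF z] power_int_inverse power_int_minus)
    have "z \<noteq> 0" using z by auto
    then have "z powi (- c i) = z powi (- (c i + (if i = 0 then e else if i = J then - e else 0)))
        * (if i = 0 then z powi e else if i = J then z powi (- e) else 1)" for i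
      using J by (auto simp flip: power_int_add)
    then show ?thesis
      by (simp add: rotation_circle [OF J z] Vdiag_def madj_mdiag mmul_mid_left mdiag_mat_n
          mmul_mdiag_mdiag complex_cnj_power_int cnj_powi)
  qed
qed

lemma star_iso_gather_exponents:
  assumes "1 \<le> m" "m \<le> n"
  shows "star_iso n (Balg_diag n c ms)
    (Balg_diag n (\<lambda>i. if i = 0 then (\<Sum>j<m. c j) else if i < m then 0 else c i) ms)"
  using assms
proof (induction m rule: nat_induct_at_least)
  case base
  have "(\<lambda>i. if i = 0 then (\<Sum>j<1. c j) else if i < 1 then 0 else c i) = c" by auto
  then show ?case by (simp add: star_iso_refl)
next
  case (Suc m)
  let ?c = "\<lambda>i. if i = 0 then (\<Sum>j<m. c j) else if i < m then 0 else c i"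
  have "(\<lambda>i. ?c i + (if i = 0 then c m else if i = m then - c m else 0))
      = (\<lambda>i. if i = 0 then (\<Sum>j<Suc m. c j) else if i < Suc m then 0 else c i)"
    using Suc.hyps by (auto simp: fun_eq_iff)
  then show ?case
    using Suc star_iso_rotation [of m n ?c ms "c m"] by (auto intro: star_iso_trans)
qed

lemma star_iso_Balg_diag_Balg:
  assumes "1 \<le> n"
  shows "star_iso n (Balg_diag n c ms) (Balg n (\<Sum>j<n. c j) ms)"
proof -
  have "Balg_diag n (\<lambda>i. if i = 0 then (\<Sum>j<n. c j) else if i < n then 0 else c i) ms
      = Balg n (\<Sum>j<n. c j) ms"
    unfolding Balg_eq_Balg_diag by (rule Balg_diag_cong) simp
  with star_iso_gather_exponents [OF assms order_refl, of c ms] show ?thesis by metis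
qed

lemma blk_Cons: "blk (m # ms) i = (if i < m then 0 else Suc (blk ms (i - m)))"
proof (cases "i < m")
  case True
  then have "{t. t < length (m # ms) \<and> sum_list (take (Suc t) (m # ms)) \<le> i} = {}" by auto
  with True show ?thesis by (simp add: blk_def)
next
  case False
  have "{t. t < length (m # ms) \<and> sum_list (take (Suc t) (m # ms)) \<le> i}
      = insert 0 (Suc ` {t. t < length ms \<and> sum_list (take (Suc t) ms) \<le> i - m})"
    (is "?L = ?R")
  proof
    show "?L \<subseteq> ?R"
    proof
      fix t assume t: "t \<in> ?L"
      show "t \<in> ?R"
      proof (cases t)
        case (Suc s)
        with t show ?thesis by auto
      qed simp
    qed
    show "?R \<subseteq> ?L" using False by auto
  qed
  moreover have "card (insert 0 (Suc ` {t. t < length ms \<and> sum_list (take (Suc t) ms) \<le> i - m}))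
      = Suc (blk ms (i - m))"
    unfolding blk_def by (subst card_insert_disjoint) (auto simp: card_image)
  ultimately show ?thesis using False by (simp add: blk_def)
qed

lemma sum_lessThan_blk:
  "(\<Sum>i<sum_list ms. a (blk ms i)) = (\<Sum>t<length ms. a t * int (ms ! t))"
proof (induction ms arbitrary: a)
  case Nil then show ?case by simp
next
  case (Cons m ms)
  have split: "(\<Sum>i<m + k. f i) = (\<Sum>i<m. f i) + (\<Sum>i<k. f (m + i))" for k and f :: "nat \<Rightarrow> int"
    by (induction k) (simp_all add: add.assoc)
  have "(\<Sum>i<sum_list (m # ms). a (blk (m # ms) i))
      = (\<Sum>i<m. a 0) + (\<Sum>i<sum_list ms. a (Suc (blk ms i)))"
    by (simp add: split blk_Cons)
  also have "\<dots> = a 0 * int m + (\<Sum>t<length ms. a (Suc t) * int (ms ! t))"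
    using Cons.IH [of "\<lambda>t. a (Suc t)"] by simp
  also have "\<dots> = (\<Sum>t<length (m # ms). a t * int ((m # ms) ! t))"
    unfolding length_Cons sum.lessThan_Suc_shift by simp
  finally show ?case .
qed

lemma Gcd_set_bezout: "\<exists>b. (\<Sum>t<length ms. b t * int (ms ! t)) = int (Gcd (set ms))"
proof (induction ms)
  case Nil then show ?case by simp
next
  case (Cons m ms)
  then obtain b where b: "(\<Sum>t<length ms. b t * int (ms ! t)) = int (Gcd (set ms))" by blast
  obtain u v where uv: "u * int m + v * int (Gcd (set ms)) = gcd (int m) (int (Gcd (set ms)))"
    using bezout_int by blast
  define b' where "b' t = (if t = 0 then u else v * b (t - 1))" for t
  have "(\<Sum>t<length (m # ms). b' t * int ((m # ms) ! t))
      = u * int m + v * (\<Sum>t<length ms. b t * int (ms ! t))"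
    unfolding length_Cons sum.lessThan_Suc_shift by (simp add: b'_def sum_distrib_left mult.assoc)
  also have "\<dots> = int (Gcd (set (m # ms)))" using uv by (simp add: b)
  finally show ?case by blast
qed

lemma block_weights_exist:
  assumes "int (Gcd (set ms)) dvd d"
  shows "\<exists>a. (\<Sum>i<sum_list ms. a (blk ms i)) = d"
proof -
  obtain k where k: "d = int (Gcd (set ms)) * k" using assms by (elim dvdE)
  obtain b where b: "(\<Sum>t<length ms. b t * int (ms ! t)) = int (Gcd (set ms))"
    using Gcd_set_bezout by blast
  have "(\<Sum>i<sum_list ms. k * b (blk ms i)) = (\<Sum>t<length ms. k * b t * int (ms ! t))"
    by (rule sum_lessThan_blk)
  also have "\<dots> = d"
    by (simp add: k b [symmetric] sum_distrib_left ac_simps)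
  finally show ?thesis by (intro exI [of _ "\<lambda>t. k * b t"])
qed

theorem theorem2:
  fixes n :: nat and ms :: "nat list" and l1 l2 :: int
  assumes "n \<ge> 1" and "sum_list ms = n"
    and "l1 mod int (Gcd (set ms)) = l2 mod int (Gcd (set ms))"
  shows "star_iso_B n l1 l2 ms"
proof -
  obtain a where a: "(\<Sum>i<n. a (blk ms i)) = l1 - l2"
    using block_weights_exist [of ms "l1 - l2"] assms(2,3) by (auto simp: mod_eq_dvd_iff)
  define c where "c i = (if i = 0 then l1 else 0) - a (blk ms i)" for i
  have "star_iso n (Balg n l1 ms) (Balg_diag n c ms)"
    unfolding Balg_eq_Balg_diag c_def by (rule star_iso_twist)
  moreover have "(\<Sum>i<n. c i) = l2"
    using assms(1) a by (simp add: c_def sum_subtractf)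
  then have "star_iso n (Balg_diag n c ms) (Balg n l2 ms)"
    using star_iso_Balg_diag_Balg [OF assms(1), of c ms] by simp
  ultimately show ?thesis
    unfolding star_iso_B_iff by (rule star_iso_trans)
qed

end
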